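(* Let $\sigma>0$, $\gamma''=\gamma(1+\sigma)$, an integer $\tau\ge1$ and $D\ge0$ be given. For every $(s,a)$ define $W_{\tau;\tau}(s,a)=0$, $Y_{\tau;\tau}(s,a)=D$, and for $t\ge\tau$: if $t\notin T^A$ then $W_{t+1;\tau}=W_{t;\tau}$ and $Y_{t+1;\tau}=Y_{t;\tau}$; if $t\in T^A$ then $W_{t+1;\tau}(s,a)=(1-\alpha_t)W_{t;\tau}(s,a)+\alpha_tw_t(s,a)$ and $Y_{t+1;\tau}(s,a)=(1-\alpha_t)Y_{t;\tau}(s,a)+\alpha_t\gamma''D$. Then on every realization for which $\|r_t\|\le D$ and $\|u^{BA}_t\|\le\sigma D$ for all $t\ge\tau$, we have for all $t\ge\tau$ and all $(s,a)$: $$-Y_{t;\tau}(s,a)+W_{t;\tau}(s,a)\le r_t(s,a)\le Y_{t;\tau}(s,a)+W_{t;\tau}(s,a).$$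
   Context: Finite MDP with discount $\gamma\in(0,1)$, rewards $R_t(s,a,s')$ with mean $R_{sa}^{s'}$; $\|Q\|=\max_{s,a}|Q(s,a)|$; $\mathcal T Q(s,a)=\mathbb E_{s'\sim P(\cdot|s,a)}[R_{sa}^{s'}+\gamma\max_{a'}Q(s',a')]$ with unique fixed point $Q^*$. Synchronous double Q-learning with learning rates $\alpha_t\in(0,1]$: at each iteration $t$ an independent fair coin selects UPDATE(A) or UPDATE(B); for every $(s,a)$ a next state $s'\sim P(\cdot|s,a)$ and a reward $R_t(s,a,s')$ are sampled. Under UPDATE(A): $a^*=\arg\max_{a'}Q^A_t(s',a')$, $Q^A_{t+1}(s,a)=Q^A_t(s,a)+\alpha_t(R_t(s,a,s')+\gamma Q^B_t(s',a^* )-Q^A_t(s,a))$, $Q^B_{t+1}=Q^B_t$. Under UPDATE(B): $b^*=\arg\max_{b'}Q^B_t(s',b')$, $Q^B_{t+1}(s,a)=Q^B_t(s,a)+\alpha_t(R_t(s,a,s')+\gamma Q^A_t(s',b^* )-Q^B_t(s,a))$, $Q^A_{t+1}=Q^A_t$. $T^A$ is the (random) set of iterations at which UPDATE(A) is chosen. $r_t:=Q^A_t-Q^*$, $u^{BA}_t:=Q^B_t-Q^A_t$, and for $t\in T^A$, $w_t(s,a):=R_t(s,a,s')+\gamma Q^A_t(s',a^* )-(\mathcal TQ^A_t)(s,a)$. *)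

theory Defs
  imports "HOL-Probability.Probability"
begin

type_synonym ('s,'a) qfun = "'s \<Rightarrow> 'a \<Rightarrow> real"

definition qnorm :: "('s::finite, 'a::finite) qfun \<Rightarrow> real" where
  "qnorm Q = Max {\<bar>Q s a\<bar> | s a. True}"

definition vmax :: "('s, 'a::finite) qfun \<Rightarrow> 's \<Rightarrow> real" where
  "vmax Q s = Max (range (Q s))"

definition bellman :: "real \<Rightarrow> ('s \<Rightarrow> 'a \<Rightarrow> 's pmf) \<Rightarrow> ('s \<Rightarrow> 'a \<Rightarrow> 's \<Rightarrow> real)
    \<Rightarrow> ('s, 'a::finite) qfun \<Rightarrow> ('s, 'a) qfun" where
  "bellman \<gamma> P Rbar Q s a =
     measure_pmf.expectation (P s a) (\<lambda>s'. Rbar s a s' + \<gamma> * vmax Q s')"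

text \<open>Synchronous double Q-learning along one realization.
  coin t = True means UPDATE(A) at iteration t (t \<in> T^A);
  ns t s a is the sampled next state s' for (s,a) at iteration t;
  R t s a s' is the sampled reward R_t(s,a,s');
  astar t s' / bstar t s' are the chosen maximisers of Q^A_t(s',.) / Q^B_t(s',.).\<close>
primrec dq :: "real \<Rightarrow> (nat \<Rightarrow> real) \<Rightarrow> (nat \<Rightarrow> bool) \<Rightarrow> (nat \<Rightarrow> 's \<Rightarrow> 'a \<Rightarrow> 's)
    \<Rightarrow> (nat \<Rightarrow> 's \<Rightarrow> 'a \<Rightarrow> 's \<Rightarrow> real) \<Rightarrow> (nat \<Rightarrow> 's \<Rightarrow> 'a) \<Rightarrow> (nat \<Rightarrow> 's \<Rightarrow> 'a)
    \<Rightarrow> ('s, 'a) qfun \<Rightarrow> ('s, 'a) qfun \<Rightarrow> nat \<Rightarrow> ('s, 'a) qfun \<times> ('s, 'a) qfun" where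
  "dq \<gamma> \<alpha> coin ns R astar bstar QA0 QB0 0 = (QA0, QB0)"
| "dq \<gamma> \<alpha> coin ns R astar bstar QA0 QB0 (Suc t) =
     (let QA = fst (dq \<gamma> \<alpha> coin ns R astar bstar QA0 QB0 t);
          QB = snd (dq \<gamma> \<alpha> coin ns R astar bstar QA0 QB0 t)
      in if coin t then
           ((\<lambda>s a. QA s a + \<alpha> t * (R t s a (ns t s a)
                 + \<gamma> * QB (ns t s a) (astar t (ns t s a)) - QA s a)), QB)
         else
           (QA, (\<lambda>s a. QB s a + \<alpha> t * (R t s a (ns t s a)
                 + \<gamma> * QA (ns t s a) (bstar t (ns t s a)) - QB s a))))"

text \<open>W_{tau+k;tau}: Wseq ... k.  wfn t is w_t (only used at t \<in> T^A).\<close>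
primrec Wseq :: "(nat \<Rightarrow> real) \<Rightarrow> (nat \<Rightarrow> bool) \<Rightarrow> (nat \<Rightarrow> ('s,'a) qfun) \<Rightarrow> nat \<Rightarrow> nat \<Rightarrow> ('s,'a) qfun" where
  "Wseq \<alpha> coin wfn \<tau> 0 = (\<lambda>s a. 0)"
| "Wseq \<alpha> coin wfn \<tau> (Suc k) =
     (if coin (\<tau> + k)
      then (\<lambda>s a. (1 - \<alpha> (\<tau> + k)) * Wseq \<alpha> coin wfn \<tau> k s a + \<alpha> (\<tau> + k) * wfn (\<tau> + k) s a)
      else Wseq \<alpha> coin wfn \<tau> k)"

text \<open>Y_{tau+k;tau}: Yseq ... k, with gamma'' = g2.\<close>
primrec Yseq :: "(nat \<Rightarrow> real) \<Rightarrow> (nat \<Rightarrow> bool) \<Rightarrow> real \<Rightarrow> real \<Rightarrow> nat \<Rightarrow> nat \<Rightarrow> ('s,'a) qfun" where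
  "Yseq \<alpha> coin g2 D \<tau> 0 = (\<lambda>s a. D)"
| "Yseq \<alpha> coin g2 D \<tau> (Suc k) =
     (if coin (\<tau> + k)
      then (\<lambda>s a. (1 - \<alpha> (\<tau> + k)) * Yseq \<alpha> coin g2 D \<tau> k s a + \<alpha> (\<tau> + k) * g2 * D)
      else Yseq \<alpha> coin g2 D \<tau> k)"

end

theory Submission
  imports Defs
begin

text \<open>On an UPDATE(A) step the error \<open>r\<^sub>t = Q\<^sup>A\<^sub>t - Q\<^sup>*\<close> becomes
  \<open>(1 - \<alpha>\<^sub>t) r\<^sub>t + \<alpha>\<^sub>t w\<^sub>t\<close> up to the perturbation
  \<open>\<alpha>\<^sub>t ((\<T>Q\<^sup>A\<^sub>t - \<T>Q\<^sup>*) + \<gamma> (Q\<^sup>B\<^sub>t - Q\<^sup>A\<^sub>t)(s', a\<^sup>*))\<close>; the Bellman operator is a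
  \<open>\<gamma>\<close>-contraction and \<open>\<parallel>u\<^sup>B\<^sup>A\<^sub>t\<parallel> \<le> \<sigma> D\<close>, so the perturbation is at most \<open>\<alpha>\<^sub>t \<gamma>(1 + \<sigma>) D\<close>.
  The recursions for \<open>W\<close> and \<open>Y\<close> carry exactly the unperturbed part and the accumulated
  perturbation bound, so the sandwich \<open>|r\<^sub>t - W\<^sub>t| \<le> Y\<^sub>t\<close> propagates by induction from
  \<open>|r\<^sub>\<tau>| \<le> D = Y\<^sub>\<tau>\<close>.\<close>

lemma abs_le_qnorm:
  fixes Q :: "('s::finite, 'a::finite) qfun"
  shows "\<bar>Q s a\<bar> \<le> qnorm Q"
proof -
  have "{\<bar>Q s a\<bar> | s a. True} = (\<lambda>(s, a). \<bar>Q s a\<bar>) ` UNIV" by auto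
  then show ?thesis unfolding qnorm_def by (simp only:) (rule Max_ge, auto)
qed

lemma abs_le_if_qnorm_le:
  fixes Q :: "('s::finite, 'a::finite) qfun"
  shows "qnorm Q \<le> c \<Longrightarrow> \<bar>Q s a\<bar> \<le> c"
  using abs_le_qnorm order_trans by blast

lemma vmax_le_vmax_add:
  fixes Q G :: "('s, 'a::finite) qfun"
  assumes "\<And>a. Q s a \<le> G s a + c"
  shows "vmax Q s \<le> vmax G s + c"
  unfolding vmax_def
proof (rule Max.boundedI)
  fix x assume "x \<in> range (Q s)"
  then obtain a where "x = Q s a" by auto
  moreover have "G s a \<le> Max (range (G s))" by (rule Max_ge) auto
  ultimately show "x \<le> Max (range (G s)) + c" using assms[of a] by linarith
qed auto

lemma abs_vmax_diff_le:
  fixes Q G :: "('s, 'a::finite) qfun"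
  assumes "\<And>a. \<bar>Q s a - G s a\<bar> \<le> c"
  shows "\<bar>vmax Q s - vmax G s\<bar> \<le> c"
proof -
  have "Q s a \<le> G s a + c" "G s a \<le> Q s a + c" for a
    using assms[of a] by (simp_all add: abs_le_iff)
  then have "vmax Q s \<le> vmax G s + c" "vmax G s \<le> vmax Q s + c"
    by (simp_all add: vmax_le_vmax_add)
  then show ?thesis by (simp add: abs_le_iff)
qed

lemma abs_bellman_diff_le:
  fixes Q G :: "('s::finite, 'a::finite) qfun"
  assumes "0 \<le> \<gamma>" and "\<And>s a. \<bar>Q s a - G s a\<bar> \<le> c"
  shows "\<bar>bellman \<gamma> P Rbar Q s a - bellman \<gamma> P Rbar G s a\<bar> \<le> \<gamma> * c"
proof -
  let ?E = "measure_pmf.expectation (P s a)"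
  have int: "integrable (measure_pmf (P s a)) f" for f :: "'s \<Rightarrow> real"
    by (rule integrable_measure_pmf_finite) auto
  have "bellman \<gamma> P Rbar Q s a - bellman \<gamma> P Rbar G s a = ?E (\<lambda>s'. \<gamma> * (vmax Q s' - vmax G s'))"
    unfolding bellman_def
    by (subst Bochner_Integration.integral_diff[symmetric]) (auto intro: int simp: algebra_simps)
  also have "\<bar>\<dots>\<bar> \<le> ?E (\<lambda>s'. \<bar>\<gamma> * (vmax Q s' - vmax G s')\<bar>)"
    by (rule integral_abs_bound)
  also have "\<dots> \<le> ?E (\<lambda>s'. \<gamma> * c)"
    using assms abs_vmax_diff_le[of Q _ G c]
    by (intro integral_mono int) (simp_all add: abs_mult mult_left_mono)
  finally show ?thesis by simp
qed

lemma sandwich_step: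
  fixes \<alpha> x x' y w v c :: real
  assumes "0 \<le> \<alpha>" and "\<alpha> \<le> 1"
    and "\<bar>x - w\<bar> \<le> y"
    and "\<bar>x' - ((1 - \<alpha>) * x + \<alpha> * v)\<bar> \<le> \<alpha> * c"
  shows "\<bar>x' - ((1 - \<alpha>) * w + \<alpha> * v)\<bar> \<le> (1 - \<alpha>) * y + \<alpha> * c"
proof -
  have "x' - ((1 - \<alpha>) * w + \<alpha> * v)
      = (x' - ((1 - \<alpha>) * x + \<alpha> * v)) + (1 - \<alpha>) * (x - w)"
    by (simp add: algebra_simps)
  also have "\<bar>\<dots>\<bar> \<le> \<bar>x' - ((1 - \<alpha>) * x + \<alpha> * v)\<bar> + \<bar>(1 - \<alpha>) * (x - w)\<bar>"
    by (rule abs_triangle_ineq)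
  also have "\<dots> \<le> \<alpha> * c + (1 - \<alpha>) * y"
    using assms by (intro add_mono) (simp_all add: abs_mult mult_left_mono)
  finally show ?thesis by simp
qed

lemma Yseq_Wseq_sandwich:
  fixes x :: "nat \<Rightarrow> ('s, 'a) qfun"
  assumes "\<And>t. 0 \<le> \<alpha> t \<and> \<alpha> t \<le> 1"
    and "\<And>s a. \<bar>x \<tau> s a\<bar> \<le> D"
    and "\<And>t. \<tau> \<le> t \<Longrightarrow> \<not> coin t \<Longrightarrow> x (Suc t) = x t"
    and "\<And>t s a. \<tau> \<le> t \<Longrightarrow> coin t \<Longrightarrow>
           \<bar>x (Suc t) s a - ((1 - \<alpha> t) * x t s a + \<alpha> t * wfn t s a)\<bar> \<le> \<alpha> t * (g * D)"
  shows "\<bar>x (\<tau> + k) s a - Wseq \<alpha> coin wfn \<tau> k s a\<bar> \<le> Yseq \<alpha> coin g D \<tau> k s a"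
proof (induction k arbitrary: s a)
  case 0
  then show ?case using assms(2) by simp
next
  case (Suc k)
  show ?case
  proof (cases "coin (\<tau> + k)")
    case True
    have "\<bar>x (Suc (\<tau> + k)) s a - ((1 - \<alpha> (\<tau> + k)) * Wseq \<alpha> coin wfn \<tau> k s a
             + \<alpha> (\<tau> + k) * wfn (\<tau> + k) s a)\<bar>
          \<le> (1 - \<alpha> (\<tau> + k)) * Yseq \<alpha> coin g D \<tau> k s a + \<alpha> (\<tau> + k) * (g * D)"
      using assms(1)[of "\<tau> + k"] by (intro sandwich_step[where x = "x (\<tau> + k) s a"] Suc.IH assms(4) True) auto
    with True show ?thesis by (simp add: mult.assoc)
  next
    case False
    with Suc.IH assms(3)[of "\<tau> + k"] show ?thesis by simp
  qed
qed

lemma double_q_update_error: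
  fixes QA QB Qs :: "('s::finite, 'a::finite) qfun"
  assumes "0 \<le> \<gamma>" and "0 \<le> \<alpha>"
    and "bellman \<gamma> P Rbar Qs = Qs"
    and "\<And>s a. \<bar>QA s a - Qs s a\<bar> \<le> D"
    and "\<bar>QB s' a' - QA s' a'\<bar> \<le> \<sigma> * D"
  shows "\<bar>QA s a + \<alpha> * (r + \<gamma> * QB s' a' - QA s a) - Qs s a
          - ((1 - \<alpha>) * (QA s a - Qs s a)
             + \<alpha> * (r + \<gamma> * QA s' a' - bellman \<gamma> P Rbar QA s a))\<bar>
         \<le> \<alpha> * (\<gamma> * (1 + \<sigma>) * D)"
proof -
  let ?d = "bellman \<gamma> P Rbar QA s a - bellman \<gamma> P Rbar Qs s a"
  let ?e = "\<gamma> * (QB s' a' - QA s' a')"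
  have "\<bar>?d + ?e\<bar> \<le> \<bar>?d\<bar> + \<bar>?e\<bar>"
    by (rule abs_triangle_ineq)
  also have "\<dots> \<le> \<gamma> * D + \<gamma> * (\<sigma> * D)"
  proof (rule add_mono)
    show "\<bar>?d\<bar> \<le> \<gamma> * D"
      using abs_bellman_diff_le[OF assms(1,4)] .
    show "\<bar>?e\<bar> \<le> \<gamma> * (\<sigma> * D)"
      unfolding abs_mult abs_of_nonneg[OF assms(1)] using assms(5) assms(1) by (rule mult_left_mono)
  qed
  also have "\<dots> = \<gamma> * (1 + \<sigma>) * D"
    by (simp add: algebra_simps)
  finally have bound: "\<bar>?d + ?e\<bar> \<le> \<gamma> * (1 + \<sigma>) * D" .
  have "QA s a + \<alpha> * (r + \<gamma> * QB s' a' - QA s a) - Qs s a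
          - ((1 - \<alpha>) * (QA s a - Qs s a)
             + \<alpha> * (r + \<gamma> * QA s' a' - bellman \<gamma> P Rbar QA s a))
      = \<alpha> * (?d + ?e)"
    using fun_cong[OF fun_cong[OF assms(3)], of s a] by (simp add: algebra_simps)
  also have "\<bar>\<dots>\<bar> = \<alpha> * \<bar>?d + ?e\<bar>"
    using assms(2) by (simp add: abs_mult)
  also have "\<dots> \<le> \<alpha> * (\<gamma> * (1 + \<sigma>) * D)"
    using bound assms(2) by (rule mult_left_mono)
  finally show ?thesis .
qed

theorem lemma12:
  fixes \<gamma> \<sigma> D :: real and \<tau> :: nat
    and P :: "'s::finite \<Rightarrow> 'a::finite \<Rightarrow> 's pmf"
    and Rbar :: "'s \<Rightarrow> 'a \<Rightarrow> 's \<Rightarrow> real"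
    and Qs QA0 QB0 :: "('s, 'a) qfun"
    and \<alpha> :: "nat \<Rightarrow> real" and coin :: "nat \<Rightarrow> bool"
    and ns :: "nat \<Rightarrow> 's \<Rightarrow> 'a \<Rightarrow> 's" and R :: "nat \<Rightarrow> 's \<Rightarrow> 'a \<Rightarrow> 's \<Rightarrow> real"
    and astar bstar :: "nat \<Rightarrow> 's \<Rightarrow> 'a"
  defines "QA \<equiv> \<lambda>t. fst (dq \<gamma> \<alpha> coin ns R astar bstar QA0 QB0 t)"
      and "QB \<equiv> \<lambda>t. snd (dq \<gamma> \<alpha> coin ns R astar bstar QA0 QB0 t)"
      and "w \<equiv> \<lambda>t s a. R t s a (ns t s a)
              + \<gamma> * fst (dq \<gamma> \<alpha> coin ns R astar bstar QA0 QB0 t) (ns t s a) (astar t (ns t s a))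
              - bellman \<gamma> P Rbar (fst (dq \<gamma> \<alpha> coin ns R astar bstar QA0 QB0 t)) s a"
  assumes "0 < \<gamma>" and "\<gamma> < 1"
    and "bellman \<gamma> P Rbar Qs = Qs"
    and "\<And>t. 0 < \<alpha> t \<and> \<alpha> t \<le> 1"
    and "\<And>t s'. QA t s' (astar t s') = vmax (QA t) s'"
    and "\<And>t s'. QB t s' (bstar t s') = vmax (QB t) s'"
    and "0 < \<sigma>" and "1 \<le> \<tau>" and "0 \<le> D"
    and "\<And>t. \<tau> \<le> t \<Longrightarrow> qnorm (\<lambda>s a. QA t s a - Qs s a) \<le> D"
    and "\<And>t. \<tau> \<le> t \<Longrightarrow> qnorm (\<lambda>s a. QB t s a - QA t s a) \<le> \<sigma> * D"
  shows "\<forall>k s a.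
     - Yseq \<alpha> coin (\<gamma> * (1 + \<sigma>)) D \<tau> k s a + Wseq \<alpha> coin w \<tau> k s a \<le> QA (\<tau> + k) s a - Qs s a
   \<and> QA (\<tau> + k) s a - Qs s a \<le> Yseq \<alpha> coin (\<gamma> * (1 + \<sigma>)) D \<tau> k s a + Wseq \<alpha> coin w \<tau> k s a"
proof -
  let ?r = "\<lambda>t s a. QA t s a - Qs s a"
  have r_bound: "\<bar>?r t s a\<bar> \<le> D" if "\<tau> \<le> t" for t s a
    using abs_le_if_qnorm_le[of "?r t"] \<open>\<And>t. \<tau> \<le> t \<Longrightarrow> qnorm (?r t) \<le> D\<close>[OF that] by simp
  have u_bound: "\<bar>QB t s a - QA t s a\<bar> \<le> \<sigma> * D" if "\<tau> \<le> t" for t s a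
    using abs_le_if_qnorm_le[of "\<lambda>s a. QB t s a - QA t s a"]
      \<open>\<And>t. \<tau> \<le> t \<Longrightarrow> qnorm (\<lambda>s a. QB t s a - QA t s a) \<le> \<sigma> * D\<close>[OF that] by simp
  have QA_Suc: "QA (Suc t) = (if coin t then (\<lambda>s a. QA t s a + \<alpha> t * (R t s a (ns t s a)
      + \<gamma> * QB t (ns t s a) (astar t (ns t s a)) - QA t s a)) else QA t)" for t
    unfolding QA_def QB_def by (simp add: Let_def)
  have w_eq: "w t s a = R t s a (ns t s a) + \<gamma> * QA t (ns t s a) (astar t (ns t s a))
      - bellman \<gamma> P Rbar (QA t) s a" for t s a
    by (simp add: w_def QA_def)
  have "\<bar>?r (\<tau> + k) s a - Wseq \<alpha> coin w \<tau> k s a\<bar> \<le> Yseq \<alpha> coin (\<gamma> * (1 + \<sigma>)) D \<tau> k s a"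
    for k s a
  proof (rule Yseq_Wseq_sandwich)
    show "0 \<le> \<alpha> t \<and> \<alpha> t \<le> 1" for t
      using \<open>\<And>t. 0 < \<alpha> t \<and> \<alpha> t \<le> 1\<close>[of t] by simp
    show "\<bar>?r \<tau> s a\<bar> \<le> D" for s a
      by (rule r_bound) simp
    show "?r (Suc t) = ?r t" if "\<not> coin t" for t
      using that by (simp add: QA_Suc)
    show "\<bar>?r (Suc t) s a - ((1 - \<alpha> t) * ?r t s a + \<alpha> t * w t s a)\<bar> \<le> \<alpha> t * (\<gamma> * (1 + \<sigma>) * D)"
      if "\<tau> \<le> t" and "coin t" for t s a
      using double_q_update_error[where QA = "QA t" and QB = "QB t" and \<alpha> = "\<alpha> t"
          and s' = "ns t s a" and a' = "astar t (ns t s a)" and r = "R t s a (ns t s a)",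
          OF _ _ \<open>bellman \<gamma> P Rbar Qs = Qs\<close> r_bound[OF that(1)] u_bound[OF that(1)]]
        \<open>0 < \<gamma>\<close> \<open>\<And>t. 0 < \<alpha> t \<and> \<alpha> t \<le> 1\<close>[of t] \<open>coin t\<close>
      by (simp add: QA_Suc w_eq)
  qed
  then show ?thesis
    unfolding abs_le_iff by (smt (verit))
qed

end
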